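(* A $\star$-metric space $(X,d^\star)$ is complete if and only if for every decreasing sequence $F_1\supseteq F_2\supseteq F_3\supseteq\cdots$ of nonempty closed subsets of $X$ with $\lim_{n\to\infty}\delta(F_n)=0$, the intersection $\bigcap_{n=1}^\infty F_n$ is a one-point set.
   Context: A $t$-definer is a function $\star:[0,\infty)\times[0,\infty)\to[0,\infty)$ such that for all $a,b,c\ge 0$: $a\star b=b\star a$; $a\star(b\star c)=(a\star b)\star c$; if $a\le b$ then $a\star c\le b\star c$; $a\star 0=a$; and $\star$ is continuous in its first variable with respect to the Euclidean topology. Given a nonempty set $X$ and a $t$-definer $\star$, a $\star$-metric on $X$ is a function $d^\star:X\times X\to[0,\infty)$ such that for all $x,y,z\in X$: $d^\star(x,y)=0$ iff $x=y$; $d^\star(x,y)=d^\star(y,x)$; and $d^\star(x,y)\le d^\star(x,z)\star d^\star(z,y)$. Closedness refers to the topology $\mathscr{T}_{d^\star}$ consisting of all $U\subseteq X$ such that for each $a\in U$ there is $r>0$ with $\{x: d^\star(a,x)<r\}\subseteq U$. The diameter of $A\subseteq X$ is $\delta(A)=\sup_{x,y\in A}d^\star(x,y)$ (possibly $\infty$), with $\delta(\emptyset)=0$. A sequence $\{x_n\}$ is Cauchy if for every $\epsilon>0$ there is $k$ with $d^\star(x_n,x_m)<\epsilon$ for all $m,n\ge k$; it converges to $x$ if for every $\epsilon>0$ there is $k$ with $d^\star(x,x_n)<\epsilon$ for $n\ge k$. $(X,d^\star)$ is complete if every Cauchy sequence converges to a point of $X$. *)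

theory Defs
  imports "HOL-Analysis.Analysis" "HOL-Library.Extended_Real"
begin

definition t_definer :: "(real \<Rightarrow> real \<Rightarrow> real) \<Rightarrow> bool" where
  "t_definer s \<longleftrightarrow>
     (\<forall>a\<ge>0. \<forall>b\<ge>0. s a b \<ge> 0) \<and>
     (\<forall>a\<ge>0. \<forall>b\<ge>0. s a b = s b a) \<and>
     (\<forall>a\<ge>0. \<forall>b\<ge>0. \<forall>c\<ge>0. s a (s b c) = s (s a b) c) \<and>
     (\<forall>a\<ge>0. \<forall>b\<ge>0. \<forall>c\<ge>0. a \<le> b \<longrightarrow> s a c \<le> s b c) \<and>
     (\<forall>a\<ge>0. s a 0 = a) \<and>
     (\<forall>c\<ge>0. continuous_on {0..} (\<lambda>a. s a c))"

definition star_metric :: "(real \<Rightarrow> real \<Rightarrow> real) \<Rightarrow> 'a set \<Rightarrow> ('a \<Rightarrow> 'a \<Rightarrow> real) \<Rightarrow> bool" where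
  "star_metric s X d \<longleftrightarrow>
     (\<forall>x\<in>X. \<forall>y\<in>X. d x y \<ge> 0) \<and>
     (\<forall>x\<in>X. \<forall>y\<in>X. d x y = 0 \<longleftrightarrow> x = y) \<and>
     (\<forall>x\<in>X. \<forall>y\<in>X. d x y = d y x) \<and>
     (\<forall>x\<in>X. \<forall>y\<in>X. \<forall>z\<in>X. d x y \<le> s (d x z) (d z y))"

definition sm_open :: "'a set \<Rightarrow> ('a \<Rightarrow> 'a \<Rightarrow> real) \<Rightarrow> 'a set \<Rightarrow> bool" where
  "sm_open X d U \<longleftrightarrow> U \<subseteq> X \<and>
     (\<forall>a\<in>U. \<exists>r>0. {x\<in>X. d a x < r} \<subseteq> U)"

definition sm_closed :: "'a set \<Rightarrow> ('a \<Rightarrow> 'a \<Rightarrow> real) \<Rightarrow> 'a set \<Rightarrow> bool" where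
  "sm_closed X d F \<longleftrightarrow> F \<subseteq> X \<and> sm_open X d (X - F)"

definition sm_diam :: "('a \<Rightarrow> 'a \<Rightarrow> real) \<Rightarrow> 'a set \<Rightarrow> ereal" where
  "sm_diam d A = (if A = {} then 0 else (SUP p\<in>A \<times> A. ereal (d (fst p) (snd p))))"

definition sm_cauchy :: "'a set \<Rightarrow> ('a \<Rightarrow> 'a \<Rightarrow> real) \<Rightarrow> (nat \<Rightarrow> 'a) \<Rightarrow> bool" where
  "sm_cauchy X d x \<longleftrightarrow> (\<forall>e>0. \<exists>k. \<forall>m\<ge>k. \<forall>n\<ge>k. d (x n) (x m) < e)"

definition sm_converges :: "'a set \<Rightarrow> ('a \<Rightarrow> 'a \<Rightarrow> real) \<Rightarrow> (nat \<Rightarrow> 'a) \<Rightarrow> 'a \<Rightarrow> bool" where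
  "sm_converges X d x l \<longleftrightarrow> (\<forall>e>0. \<exists>k. \<forall>n\<ge>k. d l (x n) < e)"

definition sm_complete :: "'a set \<Rightarrow> ('a \<Rightarrow> 'a \<Rightarrow> real) \<Rightarrow> bool" where
  "sm_complete X d \<longleftrightarrow>
     (\<forall>x. (\<forall>n. x n \<in> X) \<longrightarrow> sm_cauchy X d x \<longrightarrow> (\<exists>l\<in>X. sm_converges X d x l))"

end

theory Submission
  imports Defs
begin

text \<open>
  Continuity of a t-definer at 0 makes d(x, z) < e and d(z, y) < e force d(x, y) to be small,
  which is all that is needed of the ordinary triangle inequality for Cantor's intersection
  theorem. If X is complete, points chosen from the nested closed sets form a Cauchy sequence
  whose limit lies in every set, and it is the only point there because the diameters tend to 0.
  Conversely, the closures of the tails of a Cauchy sequence are nested nonempty closed sets of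
  diameter tending to 0; their common point is a cluster point of the sequence, hence its limit.
\<close>

lemma
  assumes "t_definer s"
  shows t_definer_commute: "0 \<le> a \<Longrightarrow> 0 \<le> b \<Longrightarrow> s a b = s b a"
    and t_definer_mono_left: "0 \<le> a \<Longrightarrow> a \<le> b \<Longrightarrow> 0 \<le> c \<Longrightarrow> s a c \<le> s b c"
    and t_definer_right_zero: "0 \<le> a \<Longrightarrow> s a 0 = a"
    and t_definer_continuous_on: "0 \<le> c \<Longrightarrow> continuous_on {0..} (\<lambda>a. s a c)"
  using assms unfolding t_definer_def by (meson order_trans)+

lemma t_definer_left_zero: "t_definer s \<Longrightarrow> 0 \<le> a \<Longrightarrow> s 0 a = a"
  by (metis order_refl t_definer_commute t_definer_right_zero)

lemma t_definer_mono:
  assumes T: "t_definer s" and "0 \<le> a" "a \<le> a'" "0 \<le> b" "b \<le> b'"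
  shows "s a b \<le> s a' b'"
proof -
  have "s a b \<le> s a' b" using assms by (intro t_definer_mono_left[OF T])
  also have "\<dots> = s b a'" using assms by (intro t_definer_commute[OF T]) auto
  also have "\<dots> \<le> s b' a'" using assms by (intro t_definer_mono_left[OF T]) auto
  also have "\<dots> = s a' b'" using assms by (intro t_definer_commute[OF T]) auto
  finally show ?thesis .
qed

lemma t_definer_exists_small:
  assumes T: "t_definer s" and "r > 0"
  shows "\<exists>e>0. s e e < r"
proof -
  let ?f = "\<lambda>a. s a (r/2)"
  have "(?f \<longlongrightarrow> ?f 0) (at 0 within {0..})"
    using t_definer_continuous_on[OF T] \<open>r > 0\<close> unfolding continuous_on_def by simp
  moreover have "?f 0 < r"
    using t_definer_left_zero[OF T, of "r/2"] \<open>r > 0\<close> by simp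
  ultimately have "\<forall>\<^sub>F a in at 0 within {0..}. ?f a < r"
    by (rule order_tendstoD(2))
  then obtain \<delta> where "\<delta> > 0" and \<delta>: "\<And>a. a \<ge> 0 \<Longrightarrow> 0 < a \<Longrightarrow> a < \<delta> \<Longrightarrow> ?f a < r"
    unfolding eventually_at by (auto simp: dist_real_def)
  define e where "e = min (\<delta>/2) (r/2)"
  have "e > 0" using \<open>\<delta> > 0\<close> \<open>r > 0\<close> by (simp add: e_def)
  have "s e e \<le> ?f e"
    using \<open>e > 0\<close> by (intro t_definer_mono[OF T]) (auto simp: e_def)
  also have "\<dots> < r"
    using \<open>e > 0\<close> \<open>\<delta> > 0\<close> by (intro \<delta>) (auto simp: e_def)
  finally show ?thesis using \<open>e > 0\<close> by blast
qed

lemma sm_diam_ge: "x \<in> A \<Longrightarrow> y \<in> A \<Longrightarrow> ereal (d x y) \<le> sm_diam d A"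
  unfolding sm_diam_def by (auto intro!: SUP_upper2[of "(x, y)"])

lemma sm_diam_le:
  assumes "\<And>x y. x \<in> A \<Longrightarrow> y \<in> A \<Longrightarrow> d x y \<le> r" and "0 \<le> r"
  shows "sm_diam d A \<le> ereal r"
  using assms unfolding sm_diam_def by (auto intro!: SUP_least)

lemma sm_diam_nonneg:
  assumes "\<And>x. x \<in> A \<Longrightarrow> 0 \<le> d x x"
  shows "0 \<le> sm_diam d A"
proof (cases "A = {}")
  case False
  then obtain x where "x \<in> A" by blast
  then have "ereal 0 \<le> sm_diam d A"
    using assms sm_diam_ge[of x A x d] by (meson ereal_less_eq(3) order_trans)
  then show ?thesis by (simp add: zero_ereal_def)
qed (simp add: sm_diam_def)

definition sm_tail_closure :: "'a set \<Rightarrow> ('a \<Rightarrow> 'a \<Rightarrow> real) \<Rightarrow> (nat \<Rightarrow> 'a) \<Rightarrow> nat \<Rightarrow> 'a set" where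
  "sm_tail_closure X d x n = {y \<in> X. \<forall>r>0. \<exists>m\<ge>n. d y (x m) < r}"

lemma decseq_sm_tail_closure: "decseq (sm_tail_closure X d x)"
  unfolding sm_tail_closure_def decseq_def by (auto intro: order_trans)

locale star_metric_space =
  fixes s :: "real \<Rightarrow> real \<Rightarrow> real" and X :: "'a set" and d :: "'a \<Rightarrow> 'a \<Rightarrow> real"
  assumes t_definer: "t_definer s" and star_metric: "star_metric s X d"
begin

lemma
  shows dist_nonneg: "x \<in> X \<Longrightarrow> y \<in> X \<Longrightarrow> 0 \<le> d x y"
    and dist_eq_0_iff: "x \<in> X \<Longrightarrow> y \<in> X \<Longrightarrow> d x y = 0 \<longleftrightarrow> x = y"
    and dist_commute: "x \<in> X \<Longrightarrow> y \<in> X \<Longrightarrow> d x y = d y x"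
  using star_metric unfolding star_metric_def by simp_all

lemma dist_triangle: "x \<in> X \<Longrightarrow> y \<in> X \<Longrightarrow> z \<in> X \<Longrightarrow> d x y \<le> s (d x z) (d z y)"
  using star_metric unfolding star_metric_def by blast

lemma dist_triangle_small:
  assumes "r > 0"
  obtains e where "e > 0"
    and "\<And>x y z. x \<in> X \<Longrightarrow> y \<in> X \<Longrightarrow> z \<in> X \<Longrightarrow> d x z < e \<Longrightarrow> d z y < e \<Longrightarrow> d x y < r"
proof -
  obtain e where "e > 0" "s e e < r"
    using t_definer_exists_small[OF t_definer assms] by blast
  moreover have "d x y < r"
    if "x \<in> X" "y \<in> X" "z \<in> X" "d x z < e" "d z y < e" for x y z
  proof -
    have "d x y \<le> s (d x z) (d z y)" using that by (intro dist_triangle)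
    also have "\<dots> \<le> s e e"
      using that by (intro t_definer_mono[OF t_definer] dist_nonneg) auto
    finally show ?thesis using \<open>s e e < r\<close> by simp
  qed
  ultimately show ?thesis by (intro that)
qed

lemma eq_if_dist_less_all:
  assumes "x \<in> X" "y \<in> X" "\<And>e. e > 0 \<Longrightarrow> d x y < e"
  shows "x = y"
proof -
  have "\<not> d x y > 0" using assms(3)[of "d x y"] by auto
  then show ?thesis using assms(1,2) dist_nonneg dist_eq_0_iff by force
qed

lemma sm_closed_converges_mem:
  assumes "sm_closed X d F" "l \<in> X" "sm_converges X d x l" "\<forall>\<^sub>F n in sequentially. x n \<in> F"
  shows "l \<in> F"
proof (rule ccontr)
  assume "l \<notin> F"
  then obtain r where "r > 0" and ball: "{z \<in> X. d l z < r} \<subseteq> X - F"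
    using assms(1,2) unfolding sm_closed_def sm_open_def by blast
  have "\<forall>\<^sub>F n in sequentially. d l (x n) < r"
    using assms(3) \<open>r > 0\<close> unfolding sm_converges_def eventually_sequentially by blast
  with assms(4) have "\<forall>\<^sub>F n in sequentially. False"
    by eventually_elim (use assms(1) ball in \<open>auto simp: sm_closed_def\<close>)
  then show False by simp
qed

lemma tendsto_sm_diam_0_iff:
  assumes "\<And>n. A n \<subseteq> X"
  shows "(\<lambda>n. sm_diam d (A n)) \<longlonglongrightarrow> 0 \<longleftrightarrow>
    (\<forall>e>0. \<forall>\<^sub>F n in sequentially. \<forall>x\<in>A n. \<forall>y\<in>A n. d x y < e)"
proof
  assume lim: "(\<lambda>n. sm_diam d (A n)) \<longlonglongrightarrow> 0"
  show "\<forall>e>0. \<forall>\<^sub>F n in sequentially. \<forall>x\<in>A n. \<forall>y\<in>A n. d x y < e"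
  proof (intro allI impI)
    fix e :: real assume "e > 0"
    with lim have "\<forall>\<^sub>F n in sequentially. sm_diam d (A n) < ereal e"
      by (intro order_tendstoD(2)) auto
    then show "\<forall>\<^sub>F n in sequentially. \<forall>x\<in>A n. \<forall>y\<in>A n. d x y < e"
    proof eventually_elim
      case (elim n)
      have "ereal (d x y) < ereal e" if "x \<in> A n" "y \<in> A n" for x y
        using sm_diam_ge[OF that] elim by (rule le_less_trans)
      then show ?case by simp
    qed
  qed
next
  assume small: "\<forall>e>0. \<forall>\<^sub>F n in sequentially. \<forall>x\<in>A n. \<forall>y\<in>A n. d x y < e"
  show "(\<lambda>n. sm_diam d (A n)) \<longlonglongrightarrow> 0"
  proof (rule order_tendstoI)
    fix l :: ereal assume "l < 0"
    moreover have "0 \<le> sm_diam d (A n)" for n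
      using assms by (intro sm_diam_nonneg dist_nonneg) auto
    ultimately show "\<forall>\<^sub>F n in sequentially. l < sm_diam d (A n)"
      by (intro always_eventually allI) (rule less_le_trans)
  next
    fix u :: ereal assume "u > 0"
    then obtain \<eta> where "0 < ereal \<eta>" "ereal \<eta> < u" using ereal_dense2 by blast
    then have "\<forall>\<^sub>F n in sequentially. \<forall>x\<in>A n. \<forall>y\<in>A n. d x y < \<eta>" using small by simp
    then show "\<forall>\<^sub>F n in sequentially. sm_diam d (A n) < u"
    proof eventually_elim
      case (elim n)
      then have "sm_diam d (A n) \<le> ereal \<eta>"
        using \<open>0 < ereal \<eta>\<close> by (intro sm_diam_le less_imp_le) auto
      then show ?case using \<open>ereal \<eta> < u\<close> by simp
    qed
  qed
qed

lemma sm_cauchy_if_nested: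
  assumes "decseq F" "\<And>n. F n \<subseteq> X" "(\<lambda>n. sm_diam d (F n)) \<longlonglongrightarrow> 0" "\<And>n. x n \<in> F n"
  shows "sm_cauchy X d x"
  unfolding sm_cauchy_def
proof (intro allI impI)
  fix e :: real assume "e > 0"
  then have "\<forall>\<^sub>F n in sequentially. \<forall>y\<in>F n. \<forall>z\<in>F n. d y z < e"
    using tendsto_sm_diam_0_iff[OF assms(2), THEN iffD1, OF assms(3)] by blast
  then obtain k where "\<forall>y\<in>F k. \<forall>z\<in>F k. d y z < e"
    unfolding eventually_sequentially by blast
  moreover have "x n \<in> F k" if "n \<ge> k" for n
    using decseqD[OF assms(1) that] assms(4) by blast
  ultimately show "\<exists>k. \<forall>m\<ge>k. \<forall>n\<ge>k. d (x n) (x m) < e" by blast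
qed

lemma sm_complete_imp_closed_nest_sing:
  assumes "sm_complete X d" "\<And>n. F n \<noteq> {}" "\<And>n. sm_closed X d (F n)" "decseq F"
    and "(\<lambda>n. sm_diam d (F n)) \<longlonglongrightarrow> 0"
  shows "\<exists>l. (\<Inter>n. F n) = {l}"
proof -
  have FX: "F n \<subseteq> X" for n using assms(3) by (simp add: sm_closed_def)
  define x where "x n = (SOME y. y \<in> F n)" for n
  have xF: "x n \<in> F n" for n using assms(2) unfolding x_def by (simp add: some_in_eq)
  then have "sm_cauchy X d x" using assms(4,5) FX by (intro sm_cauchy_if_nested)
  then obtain l where "l \<in> X" and lim: "sm_converges X d x l"
    using assms(1) xF FX unfolding sm_complete_def by blast
  have lF: "l \<in> F k" for k
  proof (rule sm_closed_converges_mem[OF assms(3) \<open>l \<in> X\<close> lim])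
    show "\<forall>\<^sub>F n in sequentially. x n \<in> F k"
      using decseqD[OF assms(4)] xF unfolding eventually_sequentially by blast
  qed
  have "y = l" if "y \<in> (\<Inter>n. F n)" for y
  proof (rule eq_if_dist_less_all)
    fix e :: real assume "e > 0"
    then have "\<forall>\<^sub>F n in sequentially. \<forall>y\<in>F n. \<forall>z\<in>F n. d y z < e"
      using tendsto_sm_diam_0_iff[OF FX, THEN iffD1, OF assms(5)] by blast
    then obtain k where "\<forall>y\<in>F k. \<forall>z\<in>F k. d y z < e"
      unfolding eventually_sequentially by blast
    then show "d y l < e" using that lF by blast
  qed (use that FX \<open>l \<in> X\<close> in auto)
  then show ?thesis using lF by blast
qed

lemma mem_sm_tail_closure: "x n \<in> X \<Longrightarrow> x n \<in> sm_tail_closure X d x n"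
  unfolding sm_tail_closure_def using dist_eq_0_iff[of "x n" "x n"] by (auto intro!: exI[of _ n])

lemma sm_closed_sm_tail_closure:
  assumes "\<And>m. x m \<in> X"
  shows "sm_closed X d (sm_tail_closure X d x n)"
  unfolding sm_closed_def sm_open_def
proof (intro conjI ballI)
  show "sm_tail_closure X d x n \<subseteq> X" "X - sm_tail_closure X d x n \<subseteq> X"
    by (auto simp: sm_tail_closure_def)
  fix a assume a: "a \<in> X - sm_tail_closure X d x n"
  then obtain r where "r > 0" and far: "\<And>m. m \<ge> n \<Longrightarrow> \<not> d a (x m) < r"
    unfolding sm_tail_closure_def by blast
  obtain e where "e > 0"
    and tri: "\<And>x y z. x \<in> X \<Longrightarrow> y \<in> X \<Longrightarrow> z \<in> X \<Longrightarrow> d x z < e \<Longrightarrow> d z y < e \<Longrightarrow> d x y < r"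
    using dist_triangle_small[OF \<open>r > 0\<close>] by blast
  have "z \<notin> sm_tail_closure X d x n" if "z \<in> X" "d a z < e" for z
  proof
    assume "z \<in> sm_tail_closure X d x n"
    then obtain m where "m \<ge> n" "d z (x m) < e"
      using \<open>e > 0\<close> unfolding sm_tail_closure_def by blast
    then show False using tri[of a "x m" z] far a that assms by blast
  qed
  then show "\<exists>e>0. {z \<in> X. d a z < e} \<subseteq> X - sm_tail_closure X d x n"
    using \<open>e > 0\<close> by blast
qed

lemma sm_diam_sm_tail_closure_tendsto_0:
  assumes "sm_cauchy X d x" "\<And>m. x m \<in> X"
  shows "(\<lambda>n. sm_diam d (sm_tail_closure X d x n)) \<longlonglongrightarrow> 0"
proof (subst tendsto_sm_diam_0_iff)
  show "sm_tail_closure X d x n \<subseteq> X" for n by (auto simp: sm_tail_closure_def)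
  show "\<forall>\<eta>>0. \<forall>\<^sub>F n in sequentially. \<forall>y\<in>sm_tail_closure X d x n. \<forall>z\<in>sm_tail_closure X d x n. d y z < \<eta>"
  proof (intro allI impI)
    fix \<eta> :: real assume "\<eta> > 0"
    obtain e1 where "e1 > 0"
      and tri1: "\<And>x y z. x \<in> X \<Longrightarrow> y \<in> X \<Longrightarrow> z \<in> X \<Longrightarrow> d x z < e1 \<Longrightarrow> d z y < e1 \<Longrightarrow> d x y < \<eta>"
      using dist_triangle_small[OF \<open>\<eta> > 0\<close>] by blast
    obtain e2 where "e2 > 0"
      and tri2: "\<And>x y z. x \<in> X \<Longrightarrow> y \<in> X \<Longrightarrow> z \<in> X \<Longrightarrow> d x z < e2 \<Longrightarrow> d z y < e2 \<Longrightarrow> d x y < e1"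
      using dist_triangle_small[OF \<open>e1 > 0\<close>] by blast
    define e where "e = min e1 e2"
    have "e > 0" using \<open>e1 > 0\<close> \<open>e2 > 0\<close> by (simp add: e_def)
    then obtain k where k: "\<And>m n. m \<ge> k \<Longrightarrow> n \<ge> k \<Longrightarrow> d (x n) (x m) < e"
      using assms(1) unfolding sm_cauchy_def by blast
    have "d y z < \<eta>"
      if "n \<ge> k" and y: "y \<in> sm_tail_closure X d x n" and z: "z \<in> sm_tail_closure X d x n" for n y z
    proof -
      obtain m where "m \<ge> n" "d y (x m) < e"
        using y \<open>e > 0\<close> unfolding sm_tail_closure_def by blast
      obtain m' where "m' \<ge> n" "d z (x m') < e"
        using z \<open>e > 0\<close> unfolding sm_tail_closure_def by blast
      have "y \<in> X" "z \<in> X" using y z by (auto simp: sm_tail_closure_def)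
      have "d (x m) (x m') < e" using k \<open>m \<ge> n\<close> \<open>m' \<ge> n\<close> \<open>n \<ge> k\<close> by simp
      moreover have "d (x m') z < e" using \<open>d z (x m') < e\<close> dist_commute \<open>z \<in> X\<close> assms(2) by simp
      ultimately have "d (x m) z < e1"
        using tri2[of "x m" z "x m'"] \<open>z \<in> X\<close> assms(2) by (simp add: e_def)
      then show ?thesis
        using tri1[of y z "x m"] \<open>d y (x m) < e\<close> \<open>y \<in> X\<close> \<open>z \<in> X\<close> assms(2) by (simp add: e_def)
    qed
    then show "\<forall>\<^sub>F n in sequentially. \<forall>y\<in>sm_tail_closure X d x n. \<forall>z\<in>sm_tail_closure X d x n. d y z < \<eta>"
      unfolding eventually_sequentially by blast
  qed
qed

lemma sm_cauchy_converges_to_cluster_point: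
  assumes "sm_cauchy X d x" "\<And>n. x n \<in> X" "l \<in> X" "\<And>n. l \<in> sm_tail_closure X d x n"
  shows "sm_converges X d x l"
  unfolding sm_converges_def
proof (intro allI impI)
  fix \<eta> :: real assume "\<eta> > 0"
  obtain e where "e > 0"
    and tri: "\<And>x y z. x \<in> X \<Longrightarrow> y \<in> X \<Longrightarrow> z \<in> X \<Longrightarrow> d x z < e \<Longrightarrow> d z y < e \<Longrightarrow> d x y < \<eta>"
    using dist_triangle_small[OF \<open>\<eta> > 0\<close>] by blast
  then obtain k where k: "\<And>m n. m \<ge> k \<Longrightarrow> n \<ge> k \<Longrightarrow> d (x n) (x m) < e"
    using assms(1) unfolding sm_cauchy_def by blast
  obtain m where "m \<ge> k" "d l (x m) < e"
    using assms(4)[of k] \<open>e > 0\<close> unfolding sm_tail_closure_def by blast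
  then have "d l (x n) < \<eta>" if "n \<ge> k" for n
    using tri[of l "x n" "x m"] k[of n m] that assms(2,3) by simp
  then show "\<exists>k. \<forall>n\<ge>k. d l (x n) < \<eta>" by blast
qed

lemma closed_nest_sing_imp_sm_complete:
  assumes "\<And>F. (\<And>n. F n \<noteq> {}) \<Longrightarrow> (\<And>n. sm_closed X d (F n)) \<Longrightarrow> decseq F \<Longrightarrow>
      (\<lambda>n. sm_diam d (F n)) \<longlonglongrightarrow> 0 \<Longrightarrow> \<exists>l. (\<Inter>n. F n) = {l}"
  shows "sm_complete X d"
  unfolding sm_complete_def
proof (intro allI impI)
  fix x assume "\<forall>n. x n \<in> X" and "sm_cauchy X d x"
  then have xX: "x n \<in> X" for n by blast
  obtain l where l: "(\<Inter>n. sm_tail_closure X d x n) = {l}"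
  proof -
    have "\<exists>l. (\<Inter>n. sm_tail_closure X d x n) = {l}"
    proof (rule assms)
      show "sm_tail_closure X d x n \<noteq> {}" for n using mem_sm_tail_closure xX by blast
      show "sm_closed X d (sm_tail_closure X d x n)" for n
        using xX by (rule sm_closed_sm_tail_closure)
      show "decseq (sm_tail_closure X d x)" by (rule decseq_sm_tail_closure)
      show "(\<lambda>n. sm_diam d (sm_tail_closure X d x n)) \<longlonglongrightarrow> 0"
        using \<open>sm_cauchy X d x\<close> xX by (rule sm_diam_sm_tail_closure_tendsto_0)
    qed
    then show thesis using that by blast
  qed
  then have lT: "l \<in> sm_tail_closure X d x n" for n by blast
  then have "l \<in> X" by (simp add: sm_tail_closure_def)
  then show "\<exists>l\<in>X. sm_converges X d x l"
    using sm_cauchy_converges_to_cluster_point[OF \<open>sm_cauchy X d x\<close> xX \<open>l \<in> X\<close> lT] by blast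
qed

end

theorem theorem4p9:
  fixes s :: "real \<Rightarrow> real \<Rightarrow> real" and X :: "'a set" and d :: "'a \<Rightarrow> 'a \<Rightarrow> real"
  assumes "t_definer s" and "X \<noteq> {}" and "star_metric s X d"
  shows "sm_complete X d \<longleftrightarrow>
    (\<forall>F :: nat \<Rightarrow> 'a set.
       (\<forall>n. F n \<noteq> {} \<and> sm_closed X d (F n)) \<longrightarrow>
       (\<forall>n. F (Suc n) \<subseteq> F n) \<longrightarrow>
       ((\<lambda>n. sm_diam d (F n)) \<longlonglongrightarrow> 0) \<longrightarrow>
       (\<exists>x. (\<Inter>n. F n) = {x}))"
proof -
  interpret star_metric_space s X d
    using assms(1,3) by unfold_locales
  show ?thesis
  proof
    assume complete: "sm_complete X d"
    show "\<forall>F. (\<forall>n. F n \<noteq> {} \<and> sm_closed X d (F n)) \<longrightarrow> (\<forall>n. F (Suc n) \<subseteq> F n) \<longrightarrow>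
        (\<lambda>n. sm_diam d (F n)) \<longlonglongrightarrow> 0 \<longrightarrow> (\<exists>x. (\<Inter>n. F n) = {x})"
      by (auto intro!: sm_complete_imp_closed_nest_sing[OF complete] decseq_SucI)
  next
    assume nest: "\<forall>F. (\<forall>n. F n \<noteq> {} \<and> sm_closed X d (F n)) \<longrightarrow> (\<forall>n. F (Suc n) \<subseteq> F n) \<longrightarrow>
        (\<lambda>n. sm_diam d (F n)) \<longlonglongrightarrow> 0 \<longrightarrow> (\<exists>x. (\<Inter>n. F n) = {x})"
    show "sm_complete X d"
    proof (rule closed_nest_sing_imp_sm_complete)
      fix F :: "nat \<Rightarrow> 'a set"
      assume "\<And>n. F n \<noteq> {}" "\<And>n. sm_closed X d (F n)" "decseq F"
        and "(\<lambda>n. sm_diam d (F n)) \<longlonglongrightarrow> 0"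
      then show "\<exists>l. (\<Inter>n. F n) = {l}"
        using nest[rule_format, of F] by (simp add: decseq_Suc_iff)
    qed
  qed
qed

end
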